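(* Let $\mathcal{D}^{\rm te}$ satisfy the test-distribution assumptions in the context, and let $(\bm x_1,y_1),\dots,(\bm x_N,y_N)$ be i.i.d. from $\mathcal{D}^{\rm te}$. Let $\bm b:=\bm 1_{d+1}$ and $\bm A:=\begin{bmatrix}\bm I_d\\ \bm 0_d^\top\end{bmatrix}\in\mathbb{R}^{(d+1)\times d}$. Then there is a constant $K>0$, depending only on the constants $C_i,C_{i,n}$ (through uniform upper bounds on them) and not on $d_{\rm rob},d_{\rm vul},d_{\rm irr},\alpha,\beta,\gamma,N$, such that $$\mathbb{E}\Big[\Big\|\tfrac1N\bm b^\top\bm Z\bm M\bm Z^\top\bm A\Big\|_1\Big]\le K\Big\{(d_{\rm rob}\alpha+d_{\rm vul}\beta+1)\Big(d_{\rm rob}\alpha+d_{\rm vul}\beta+\frac{d_{\rm irr}\gamma}{\sqrt N}\Big)+d_{\rm irr}\Big(\sqrt{\tfrac{d_{\rm irr}}{N}}+1\Big)\gamma^2\Big\}.$$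
   Context: $[n]:=\{1,\dots,n\}$; $U(\mathcal S)$ is the uniform distribution on $\mathcal S$; $\bm 1_a,\bm 0_a,\bm I_a$ denote the all-ones vector, all-zeros vector and identity. $\bm Z\in\mathbb{R}^{(d+1)\times(N+1)}$ has $n$-th column $(\bm x_n^\top,y_n)^\top$ for $n\le N$ and an arbitrary last column of the form $(\bm v^\top,0)^\top$; $\bm M:=\begin{bmatrix}\bm I_N&0\\0&0\end{bmatrix}$, so $\bm Z\bm M\bm Z^\top=\sum_{n=1}^N(\bm x_n^\top,y_n)^\top(\bm x_n^\top,y_n)$ does not depend on the last column. Test distribution: $[d]$ is partitioned into disjoint index sets $\mathcal S_{\rm rob},\mathcal S_{\rm vul},\mathcal S_{\rm irr}$ with sizes $d_{\rm rob},d_{\rm vul},d_{\rm irr}$; scales $\alpha>0$, $\beta>0$, $\gamma\ge0$. A sample $(\bm x,y)\sim\mathcal{D}^{\rm te}$ satisfies: (1) $y\sim U(\{\pm1\})$; (2) $\mathbb{E}[x_i]=0$ for $i\in\mathcal S_{\rm irr}$, and for every $i\in[d]$ there are constants $C_i>0$ and $C_{i,n}\ge0$ ($n=2,3,4$) with $\mathbb{E}[yx_i]=C_i\alpha$ for $i\in\mathcal S_{\rm rob}$, $=C_i\beta$ for $i\in\mathcal S_{\rm vul}$, $=0$ for $i\in\mathcal S_{\rm irr}$, and $|\mathbb{E}[(yx_i-\mathbb{E}[yx_i])^n]|\le C_{i,n}\alpha^n$, $C_{i,n}\beta^n$, $C_{i,n}\gamma^n$ for $i$ in $\mathcal S_{\rm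 rob}$, $\mathcal S_{\rm vul}$, $\mathcal S_{\rm irr}$ respectively; (3) there are constants $0\le q_{\rm rob},q_{\rm vul}<1$ such that the number of $i\in\mathcal S_{\rm rob}$ with $\sum_{j\in\mathcal S_{\rm rob}\cup\mathcal S_{\rm vul}}\mathrm{Cov}(x_i,x_j)<0$ is at most $q_{\rm rob}d_{\rm rob}$, and the number of $i\in\mathcal S_{\rm vul}$ with this property is at most $q_{\rm vul}d_{\rm vul}$; (4) for every $i\in\mathcal S_{\rm irr}$, $x_i$ is independent of $(y,(x_j)_{j\ne i})$. *)

theory Defs
  imports "HOL-Probability.Probability"
begin

text \<open>A sample is a pair (x, y) with x :: nat => real (only coordinates 1..d are used) and y :: real.
  Matrices are functions nat => nat => real, indexed from 1, with dimensions tracked explicitly.\<close>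

type_synonym sample = "(nat \<Rightarrow> real) \<times> real"
type_synonym rmat = "nat \<Rightarrow> nat \<Rightarrow> real"

definition mmul :: "nat \<Rightarrow> rmat \<Rightarrow> rmat \<Rightarrow> rmat" where
  "mmul m A B = (\<lambda>i j. \<Sum>k=1..m. A i k * B k j)"

definition mtr :: "rmat \<Rightarrow> rmat" where
  "mtr A = (\<lambda>i j. A j i)"

text \<open>Z in R^{(d+1) x (N+1)}: column n (1<=n<=N) is (x_n, y_n), column N+1 is (v, 0).\<close>
definition Zmat :: "nat \<Rightarrow> nat \<Rightarrow> (nat \<Rightarrow> real) \<Rightarrow> (nat \<Rightarrow> sample) \<Rightarrow> rmat" where
  "Zmat d N v s = (\<lambda>i n. if n \<le> N then (if i \<le> d then fst (s n) i else snd (s n))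
                          else (if i \<le> d then v i else 0))"

definition Mmat :: "nat \<Rightarrow> rmat" where
  "Mmat N = (\<lambda>i j. if i = j \<and> i \<le> N then 1 else 0)"

definition Amat :: "nat \<Rightarrow> rmat" where
  "Amat d = (\<lambda>i j. if i = j \<and> i \<le> d then 1 else 0)"

definition bT :: rmat where
  "bT = (\<lambda>i j. 1)"

definition row_l1 :: "nat \<Rightarrow> rmat \<Rightarrow> real" where
  "row_l1 d r = (\<Sum>j=1..d. \<bar>r 1 j\<bar>)"

definition quantity :: "nat \<Rightarrow> nat \<Rightarrow> (nat \<Rightarrow> real) \<Rightarrow> (nat \<Rightarrow> sample) \<Rightarrow> rmat" where
  "quantity d N v s = (\<lambda>i j. (1 / real N) *
     mmul (d+1) (mmul (N+1) (mmul (N+1) (mmul (d+1) bT (Zmat d N v s)) (Mmat N))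
                 (mtr (Zmat d N v s))) (Amat d) i j)"

definition cov :: "sample measure \<Rightarrow> (sample \<Rightarrow> real) \<Rightarrow> (sample \<Rightarrow> real) \<Rightarrow> real" where
  "cov D X Y = integral\<^sup>L D (\<lambda>z. (X z - integral\<^sup>L D X) * (Y z - integral\<^sup>L D Y))"

text \<open>In (4), prob_space.indep_var needs both variables to share a codomain type, so x_i is
  encoded as the sample with all other coordinates (and y) zeroed, and (y, (x_j)_{j ~= i})
  as the sample with coordinate i zeroed; these generate the same sigma-algebras.\<close>

definition test_dist :: "sample measure \<Rightarrow> nat \<Rightarrow> nat set \<Rightarrow> nat set \<Rightarrow> nat set \<Rightarrow>
    real \<Rightarrow> real \<Rightarrow> real \<Rightarrow> (nat \<Rightarrow> real) \<Rightarrow> (nat \<Rightarrow> nat \<Rightarrow> real) \<Rightarrow> real \<Rightarrow> real \<Rightarrow> bool" where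
  "test_dist D d Srob Svul Sirr \<alpha> \<beta> \<gamma> C Cn qr qv \<longleftrightarrow>
     prob_space D \<and> sets D = sets (borel :: sample measure) \<and>
     Srob \<union> Svul \<union> Sirr = {1..d} \<and> Srob \<inter> Svul = {} \<and> Srob \<inter> Sirr = {} \<and> Svul \<inter> Sirr = {} \<and>
     \<alpha> > 0 \<and> \<beta> > 0 \<and> \<gamma> \<ge> 0 \<and>
     \<comment> \<open>(1) y uniform on {+1,-1}\<close>
     measure D {z \<in> space D. snd z = 1} = 1/2 \<and> measure D {z \<in> space D. snd z = -1} = 1/2 \<and>
     \<comment> \<open>(2) moment conditions (the moments involved exist)\<close>
     (\<forall>i\<in>{1..d}. integrable D (\<lambda>z. snd z * fst z i) \<and>
        (\<forall>n\<in>{2,3,4::nat}. integrable D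
           (\<lambda>z. (snd z * fst z i - integral\<^sup>L D (\<lambda>w. snd w * fst w i)) ^ n))) \<and>
     (\<forall>i\<in>Sirr. integral\<^sup>L D (\<lambda>z. fst z i) = 0) \<and>
     (\<forall>i\<in>{1..d}. C i > 0 \<and> (\<forall>n\<in>{2,3,4::nat}. Cn i n \<ge> 0)) \<and>
     (\<forall>i\<in>Srob. integral\<^sup>L D (\<lambda>z. snd z * fst z i) = C i * \<alpha>) \<and>
     (\<forall>i\<in>Svul. integral\<^sup>L D (\<lambda>z. snd z * fst z i) = C i * \<beta>) \<and>
     (\<forall>i\<in>Sirr. integral\<^sup>L D (\<lambda>z. snd z * fst z i) = 0) \<and>
     (\<forall>i\<in>Srob. \<forall>n\<in>{2,3,4::nat}. \<bar>integral\<^sup>L D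
        (\<lambda>z. (snd z * fst z i - integral\<^sup>L D (\<lambda>w. snd w * fst w i)) ^ n)\<bar> \<le> Cn i n * \<alpha> ^ n) \<and>
     (\<forall>i\<in>Svul. \<forall>n\<in>{2,3,4::nat}. \<bar>integral\<^sup>L D
        (\<lambda>z. (snd z * fst z i - integral\<^sup>L D (\<lambda>w. snd w * fst w i)) ^ n)\<bar> \<le> Cn i n * \<beta> ^ n) \<and>
     (\<forall>i\<in>Sirr. \<forall>n\<in>{2,3,4::nat}. \<bar>integral\<^sup>L D
        (\<lambda>z. (snd z * fst z i - integral\<^sup>L D (\<lambda>w. snd w * fst w i)) ^ n)\<bar> \<le> Cn i n * \<gamma> ^ n) \<and>
     \<comment> \<open>(3) covariance condition\<close>
     0 \<le> qr \<and> qr < 1 \<and> 0 \<le> qv \<and> qv < 1 \<and>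
     real (card {i \<in> Srob. (\<Sum>j\<in>Srob \<union> Svul. cov D (\<lambda>z. fst z i) (\<lambda>z. fst z j)) < 0}) \<le> qr * real (card Srob) \<and>
     real (card {i \<in> Svul. (\<Sum>j\<in>Srob \<union> Svul. cov D (\<lambda>z. fst z i) (\<lambda>z. fst z j)) < 0}) \<le> qv * real (card Svul) \<and>
     \<comment> \<open>(4) irrelevant features independent of everything else\<close>
     (\<forall>i\<in>Sirr. prob_space.indep_var D (borel :: sample measure)
        (\<lambda>z. (\<lambda>j. if j = i then fst z j else 0, 0)) borel
        (\<lambda>z. (\<lambda>j. if j \<in> {1..d} - {i} then fst z j else 0, snd z)))"

end

theory Submission
  imports Defs
begin

(* Write z = (x, y) as a vector in R^(d+1). Row j of (1/N) b^T Z M Z^T A is the sample mean of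
   (z_1 + ... + z_(d+1)) z_j, so by the triangle inequality it suffices to bound the expected absolute
   sample mean of each product z_i z_j. By Cauchy-Schwarz this is at most sigma_i sigma_j, where
   sigma_i is the L2 norm of z_i. If one of the two factors is an irrelevant feature, the product is
   centred (independence and mean zero), and the sample mean of N centred i.i.d. terms gains a factor
   1/sqrt N. For irrelevant j, the other irrelevant features are grouped into a single centred term
   whose second moment is the sum of their sigma_i^2, which yields the sqrt(d_irr/N) term. The
   moment assumptions and y^2 = 1 give sigma_i <= sqrt(|Cbar| + Cbar^2) times the scale of i. *)

lemma integrable_mult_of_square_integrable:
  fixes f g :: "'a \<Rightarrow> real"
  assumes [measurable]: "f \<in> borel_measurable M" "g \<in> borel_measurable M"
    and "integrable M (\<lambda>x. (f x)\<^sup>2)" "integrable M (\<lambda>x. (g x)\<^sup>2)"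
  shows "integrable M (\<lambda>x. f x * g x)"
proof (rule Bochner_Integration.integrable_bound)
  show "integrable M (\<lambda>x. ((f x)\<^sup>2 + (g x)\<^sup>2) / 2)"
    using assms by auto
  show "AE x in M. norm (f x * g x) \<le> norm (((f x)\<^sup>2 + (g x)\<^sup>2) / 2)"
  proof (intro AE_I2)
    fix x
    have "0 \<le> (\<bar>f x\<bar> - \<bar>g x\<bar>)\<^sup>2" by simp
    then show "norm (f x * g x) \<le> norm (((f x)\<^sup>2 + (g x)\<^sup>2) / 2)"
      by (simp add: power2_eq_square abs_mult algebra_simps)
  qed
qed auto

lemma integral_abs_mult_le_sqrt:
  fixes f g :: "'a \<Rightarrow> real"
  assumes [measurable]: "f \<in> borel_measurable M" "g \<in> borel_measurable M"
    and f2: "integrable M (\<lambda>x. (f x)\<^sup>2)" and g2: "integrable M (\<lambda>x. (g x)\<^sup>2)"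
  shows "(\<integral>x. \<bar>f x * g x\<bar> \<partial>M) \<le> sqrt (\<integral>x. (f x)\<^sup>2 \<partial>M) * sqrt (\<integral>x. (g x)\<^sup>2 \<partial>M)"
proof -
  have fg: "integrable M (\<lambda>x. \<bar>f x * g x\<bar>)"
    using integrable_mult_of_square_integrable[OF assms] by auto
  have "(\<integral>\<^sup>+x. ennreal \<bar>f x\<bar> * ennreal \<bar>g x\<bar> \<partial>M)\<^sup>2
      \<le> (\<integral>\<^sup>+x. (ennreal \<bar>f x\<bar>)\<^sup>2 \<partial>M) * (\<integral>\<^sup>+x. (ennreal \<bar>g x\<bar>)\<^sup>2 \<partial>M)"
    by (rule Cauchy_Schwarz_nn_integral) auto
  also have "(\<lambda>x. ennreal \<bar>f x\<bar> * ennreal \<bar>g x\<bar>) = (\<lambda>x. ennreal \<bar>f x * g x\<bar>)"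
    by (auto simp: ennreal_mult[symmetric] abs_mult)
  also have "(\<lambda>x. (ennreal \<bar>f x\<bar>)\<^sup>2) = (\<lambda>x. ennreal ((f x)\<^sup>2))"
    by (auto simp: ennreal_power)
  also have "(\<lambda>x. (ennreal \<bar>g x\<bar>)\<^sup>2) = (\<lambda>x. ennreal ((g x)\<^sup>2))"
    by (auto simp: ennreal_power)
  also have "(\<integral>\<^sup>+x. ennreal \<bar>f x * g x\<bar> \<partial>M) = ennreal (\<integral>x. \<bar>f x * g x\<bar> \<partial>M)"
    by (rule nn_integral_eq_integral[OF fg]) auto
  also have "(\<integral>\<^sup>+x. ennreal ((f x)\<^sup>2) \<partial>M) = ennreal (\<integral>x. (f x)\<^sup>2 \<partial>M)"
    by (rule nn_integral_eq_integral[OF f2]) auto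
  also have "(\<integral>\<^sup>+x. ennreal ((g x)\<^sup>2) \<partial>M) = ennreal (\<integral>x. (g x)\<^sup>2 \<partial>M)"
    by (rule nn_integral_eq_integral[OF g2]) auto
  finally have "ennreal ((\<integral>x. \<bar>f x * g x\<bar> \<partial>M)\<^sup>2)
      \<le> ennreal ((\<integral>x. (f x)\<^sup>2 \<partial>M) * (\<integral>x. (g x)\<^sup>2 \<partial>M))"
    by (simp add: ennreal_power ennreal_mult integral_nonneg_AE)
  then have "(\<integral>x. \<bar>f x * g x\<bar> \<partial>M)\<^sup>2 \<le> (\<integral>x. (f x)\<^sup>2 \<partial>M) * (\<integral>x. (g x)\<^sup>2 \<partial>M)"
    by (subst (asm) ennreal_le_iff) (auto intro!: mult_nonneg_nonneg integral_nonneg_AE)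
  then show ?thesis
    by (metis real_le_rsqrt real_sqrt_mult)
qed

lemma (in prob_space) integral_abs_le_sqrt_integral_square:
  fixes f :: "'a \<Rightarrow> real"
  assumes "f \<in> borel_measurable M" "integrable M (\<lambda>x. (f x)\<^sup>2)"
  shows "(\<integral>x. \<bar>f x\<bar> \<partial>M) \<le> sqrt (\<integral>x. (f x)\<^sup>2 \<partial>M)"
  using integral_abs_mult_le_sqrt[of f M "\<lambda>_. 1"] assms by (simp add: prob_space)

lemma integrable_square_sum:
  fixes f :: "'i \<Rightarrow> 'a \<Rightarrow> real"
  assumes "\<And>i. i \<in> A \<Longrightarrow> f i \<in> borel_measurable M"
    and "\<And>i. i \<in> A \<Longrightarrow> integrable M (\<lambda>x. (f i x)\<^sup>2)"
  shows "integrable M (\<lambda>x. (\<Sum>i\<in>A. f i x)\<^sup>2)"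
  unfolding power2_eq_square sum_product
  by (intro Bochner_Integration.integrable_sum integrable_mult_of_square_integrable assms)

lemma integral_square_sum_orthogonal:
  fixes f :: "'i \<Rightarrow> 'a \<Rightarrow> real"
  assumes "finite A"
    and meas: "\<And>i. i \<in> A \<Longrightarrow> f i \<in> borel_measurable M"
    and sq: "\<And>i. i \<in> A \<Longrightarrow> integrable M (\<lambda>x. (f i x)\<^sup>2)"
    and orth: "\<And>i k. i \<in> A \<Longrightarrow> k \<in> A \<Longrightarrow> i \<noteq> k \<Longrightarrow> (\<integral>x. f i x * f k x \<partial>M) = 0"
  shows "(\<integral>x. (\<Sum>i\<in>A. f i x)\<^sup>2 \<partial>M) = (\<Sum>i\<in>A. \<integral>x. (f i x)\<^sup>2 \<partial>M)"
proof -
  have fk: "integrable M (\<lambda>x. f i x * f k x)" if "i \<in> A" "k \<in> A" for i k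
    using that by (intro integrable_mult_of_square_integrable meas sq)
  have "(\<integral>x. (\<Sum>i\<in>A. f i x)\<^sup>2 \<partial>M) = (\<Sum>i\<in>A. \<Sum>k\<in>A. \<integral>x. f i x * f k x \<partial>M)"
    unfolding power2_eq_square sum_product
    by (simp add: Bochner_Integration.integral_sum Bochner_Integration.integrable_sum fk)
  also have "\<dots> = (\<Sum>i\<in>A. \<Sum>k\<in>A. if i = k then \<integral>x. (f i x)\<^sup>2 \<partial>M else 0)"
    by (intro sum.cong refl) (auto simp: orth power2_eq_square)
  also have "\<dots> = (\<Sum>i\<in>A. \<integral>x. (f i x)\<^sup>2 \<partial>M)"
    using \<open>finite A\<close> by simp
  finally show ?thesis .
qed

lemma integral_abs_sum_le:
  fixes f :: "'i \<Rightarrow> 'a \<Rightarrow> real"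
  assumes "\<And>i. i \<in> A \<Longrightarrow> integrable M (f i)"
  shows "(\<integral>x. \<bar>\<Sum>i\<in>A. f i x\<bar> \<partial>M) \<le> (\<Sum>i\<in>A. \<integral>x. \<bar>f i x\<bar> \<partial>M)"
proof -
  have "(\<integral>x. \<bar>\<Sum>i\<in>A. f i x\<bar> \<partial>M) \<le> (\<integral>x. (\<Sum>i\<in>A. \<bar>f i x\<bar>) \<partial>M)"
    by (intro integral_mono sum_abs Bochner_Integration.integrable_sum integrable_abs assms)
  also have "\<dots> = (\<Sum>i\<in>A. \<integral>x. \<bar>f i x\<bar> \<partial>M)"
    by (intro Bochner_Integration.integral_sum integrable_abs assms)
  finally show ?thesis .
qed

lemma
  fixes h :: "'a \<Rightarrow> real"
  assumes "prob_space D" "n \<in> I" "integrable D h"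
  shows integrable_component_PiM: "integrable (PiM I (\<lambda>_. D)) (\<lambda>x. h (x n))"
    and integral_component_PiM: "(\<integral>x. h (x n) \<partial>PiM I (\<lambda>_. D)) = integral\<^sup>L D h"
proof -
  have distr: "distr (PiM I (\<lambda>_. D)) D (\<lambda>x. x n) = D"
    using assms by (intro distr_PiM_component) auto
  have meas: "(\<lambda>x. x n) \<in> measurable (PiM I (\<lambda>_. D)) D"
    using assms by measurable
  have h: "h \<in> borel_measurable D"
    using assms by auto
  show "integrable (PiM I (\<lambda>_. D)) (\<lambda>x. h (x n))"
    using integrable_distr_eq[OF meas h] assms distr by simp
  show "(\<integral>x. h (x n) \<partial>PiM I (\<lambda>_. D)) = integral\<^sup>L D h"
    using integral_distr[OF meas h] distr by simp
qed

lemma integral_two_components_PiM: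
  fixes g h :: "'a \<Rightarrow> real"
  assumes D: "prob_space D" and I: "finite I" "n \<in> I" "m \<in> I" "n \<noteq> m"
    and "integrable D g" "integrable D h"
  shows "(\<integral>x. g (x n) * h (x m) \<partial>PiM I (\<lambda>_. D)) = integral\<^sup>L D g * integral\<^sup>L D h"
proof -
  interpret product_sigma_finite "\<lambda>_. D"
    by (simp add: product_sigma_finite_def D prob_space_imp_sigma_finite)
  interpret prob_space D by (rule D)
  define f where "f k = (if k = n then g else if k = m then h else (\<lambda>_. 1))" for k
  have prod_two: "(\<Prod>k\<in>I. if k = n then a else if k = m then b else 1) = a * b" for a b :: real
    using I by (simp add: prod.remove[of I n] prod.remove[of "I - {n}" m])
  have "(\<integral>x. (\<Prod>k\<in>I. f k (x k)) \<partial>PiM I (\<lambda>_. D)) = (\<Prod>k\<in>I. integral\<^sup>L D (f k))"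
    by (rule product_integral_prod[OF I(1)]) (simp add: f_def assms)
  moreover have "(\<Prod>k\<in>I. f k (x k)) = g (x n) * h (x m)" for x
    unfolding prod_two[symmetric] by (intro prod.cong) (auto simp: f_def)
  moreover have "(\<Prod>k\<in>I. integral\<^sup>L D (f k)) = integral\<^sup>L D g * integral\<^sup>L D h"
    unfolding prod_two[symmetric] by (intro prod.cong) (auto simp: f_def prob_space)
  ultimately show ?thesis
    by simp
qed

definition sample_mean :: "nat \<Rightarrow> ('a \<Rightarrow> real) \<Rightarrow> (nat \<Rightarrow> 'a) \<Rightarrow> real" where
  "sample_mean N g x = (\<Sum>n\<in>{1..N}. g (x n)) / real N"

definition expected_abs_mean :: "'a measure \<Rightarrow> nat \<Rightarrow> ('a \<Rightarrow> real) \<Rightarrow> real" where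
  "expected_abs_mean D N g = (\<integral>x. \<bar>sample_mean N g x\<bar> \<partial>PiM {1..N} (\<lambda>_. D))"

lemma integrable_sample_mean:
  fixes g :: "'a \<Rightarrow> real"
  assumes "prob_space D" "integrable D g"
  shows "integrable (PiM {1..N} (\<lambda>_. D)) (sample_mean N g)"
  unfolding sample_mean_def[abs_def]
  using assms by (intro integrable_divide Bochner_Integration.integrable_sum integrable_component_PiM)

lemma sample_mean_sum:
  "sample_mean N (\<lambda>z. \<Sum>i\<in>A. f i z) x = (\<Sum>i\<in>A. sample_mean N (f i) x)"
  unfolding sample_mean_def by (simp add: sum_divide_distrib[symmetric] sum.swap[of _ A])

lemma expected_abs_mean_sum_le:
  fixes f :: "'i \<Rightarrow> 'a \<Rightarrow> real"
  assumes "prob_space D" "\<And>i. i \<in> A \<Longrightarrow> integrable D (f i)"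
  shows "expected_abs_mean D N (\<lambda>z. \<Sum>i\<in>A. f i z) \<le> (\<Sum>i\<in>A. expected_abs_mean D N (f i))"
  unfolding expected_abs_mean_def sample_mean_sum
  using assms by (intro integral_abs_sum_le integrable_sample_mean)

lemma expected_abs_mean_add_le:
  fixes f g :: "'a \<Rightarrow> real"
  assumes D: "prob_space D" and f: "integrable D f" and g: "integrable D g"
  shows "expected_abs_mean D N (\<lambda>z. f z + g z) \<le> expected_abs_mean D N f + expected_abs_mean D N g"
proof -
  let ?P = "PiM {1..N} (\<lambda>_. D)"
  have add: "sample_mean N (\<lambda>z. f z + g z) x = sample_mean N f x + sample_mean N g x" for x
    unfolding sample_mean_def by (simp add: sum.distrib add_divide_distrib)
  have mf: "integrable ?P (\<lambda>x. \<bar>sample_mean N f x\<bar>)" and mg: "integrable ?P (\<lambda>x. \<bar>sample_mean N g x\<bar>)"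
    using integrable_sample_mean[OF D f] integrable_sample_mean[OF D g] by auto
  have "expected_abs_mean D N (\<lambda>z. f z + g z)
      \<le> (\<integral>x. \<bar>sample_mean N f x\<bar> + \<bar>sample_mean N g x\<bar> \<partial>?P)"
    unfolding expected_abs_mean_def add
    using integrable_sample_mean[OF D f] integrable_sample_mean[OF D g] mf mg
    by (intro integral_mono) auto
  also have "\<dots> = expected_abs_mean D N f + expected_abs_mean D N g"
    unfolding expected_abs_mean_def using mf mg by simp
  finally show ?thesis .
qed

lemma expected_abs_mean_le:
  fixes g :: "'a \<Rightarrow> real"
  assumes D: "prob_space D" and g: "integrable D g" and N: "N \<ge> 1"
  shows "expected_abs_mean D N g \<le> (\<integral>z. \<bar>g z\<bar> \<partial>D)"
proof -
  have "expected_abs_mean D N g \<le> (\<integral>x. (\<Sum>n\<in>{1..N}. \<bar>g (x n)\<bar>) / real N \<partial>PiM {1..N} (\<lambda>_. D))"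
    unfolding expected_abs_mean_def sample_mean_def
    using assms by (intro integral_mono integrable_abs integrable_divide
        Bochner_Integration.integrable_sum integrable_component_PiM)
      (auto simp: abs_div intro!: divide_right_mono sum_abs)
  also have "\<dots> = (\<Sum>n\<in>{1..N}. \<integral>x. \<bar>g (x n)\<bar> \<partial>PiM {1..N} (\<lambda>_. D)) / real N"
    unfolding integral_divide_zero
    using assms by (subst Bochner_Integration.integral_sum) (auto intro: integrable_component_PiM)
  also have "\<dots> = (\<Sum>n\<in>{1..N}. \<integral>z. \<bar>g z\<bar> \<partial>D) / real N"
    by (intro arg_cong[where f = "\<lambda>t. t / real N"] sum.cong refl
        integral_component_PiM[OF D _ integrable_abs[OF g]])
  also have "\<dots> = (\<integral>z. \<bar>g z\<bar> \<partial>D)"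
    using N by simp
  finally show ?thesis .
qed

lemma expected_abs_mean_centered_le:
  fixes g :: "'a \<Rightarrow> real"
  assumes D: "prob_space D" and [measurable]: "g \<in> borel_measurable D"
    and g2: "integrable D (\<lambda>z. (g z)\<^sup>2)" and g0: "integral\<^sup>L D g = 0" and N: "N \<ge> 1"
  shows "expected_abs_mean D N g \<le> sqrt ((\<integral>z. (g z)\<^sup>2 \<partial>D) / real N)"
proof -
  interpret prob_space D by fact
  let ?P = "PiM {1..N} (\<lambda>_. D)"
  interpret P: prob_space ?P
    by (intro prob_space_PiM) (simp add: D)
  have g: "integrable D g"
    using square_integrable_imp_integrable[OF _ g2] by simp
  have sq: "integrable ?P (\<lambda>x. (g (x n))\<^sup>2)" "(\<integral>x. (g (x n))\<^sup>2 \<partial>?P) = (\<integral>z. (g z)\<^sup>2 \<partial>D)"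
    if "n \<in> {1..N}" for n
    using integrable_component_PiM[OF D that g2] integral_component_PiM[OF D that g2] by auto
  have orth: "(\<integral>x. g (x n) * g (x k) \<partial>?P) = 0" if "n \<in> {1..N}" "k \<in> {1..N}" "n \<noteq> k" for n k
    using integral_two_components_PiM[OF D _ that g g] g0 by simp
  have "(\<integral>x. (\<Sum>n\<in>{1..N}. g (x n))\<^sup>2 \<partial>?P) = (\<Sum>n\<in>{1..N}. \<integral>x. (g (x n))\<^sup>2 \<partial>?P)"
    using sq orth by (intro integral_square_sum_orthogonal) auto
  also have "\<dots> = real N * (\<integral>z. (g z)\<^sup>2 \<partial>D)"
    using sq by simp
  finally have "(\<integral>x. (sample_mean N g x)\<^sup>2 \<partial>?P) = (\<integral>z. (g z)\<^sup>2 \<partial>D) / real N"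
    using N by (simp add: sample_mean_def power_divide power2_eq_square)
  moreover have "integrable ?P (\<lambda>x. (sample_mean N g x)\<^sup>2)"
    unfolding sample_mean_def power_divide using sq
    by (intro integrable_divide integrable_square_sum) auto
  moreover have "sample_mean N g \<in> borel_measurable ?P"
    using integrable_sample_mean[OF D g] by auto
  ultimately show ?thesis
    unfolding expected_abs_mean_def
    using P.integral_abs_le_sqrt_integral_square by metis
qed

lemma polynomial_bound_arith:
  fixes s SR SI Q W r Rr dI \<gamma> :: real
  assumes nonneg: "s \<ge> 0" "SR \<ge> 0" "SI \<ge> 0" "W \<ge> 0" "r > 0" "Rr \<ge> 0" "dI \<ge> 0" "\<gamma> \<ge> 0"
    and bounds: "SR \<le> s * Rr" "SI \<le> s * (dI * \<gamma>)" "Q \<le> s\<^sup>2 * (dI * \<gamma>\<^sup>2)" "W \<le> s * (sqrt dI * \<gamma>)"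
  shows "SR * (1 + SR + SI / r) + SI * (1 + SR + W) / r + Q
    \<le> (1 + s + 2 * s\<^sup>2) * ((Rr + 1) * (Rr + dI * \<gamma> / r) + dI * (sqrt dI / r + 1) * \<gamma>\<^sup>2)"
proof -
  define K where "K = 1 + s + 2 * s\<^sup>2"
  define E where "E = dI * \<gamma> / r"
  have E: "E \<ge> 0" "SI / r \<le> s * E"
    using nonneg bounds(2) by (auto simp: E_def divide_right_mono)
  have K: "s \<le> K" "s\<^sup>2 \<le> K" "2 * s\<^sup>2 \<le> K"
    using nonneg by (auto simp: K_def)
  have "SR \<le> K * Rr"
    using bounds(1) K(1) nonneg by (meson mult_right_mono order_trans)
  moreover have "SR * SR \<le> K * (Rr * Rr)"
  proof -
    have "SR * SR \<le> (s * Rr) * (s * Rr)"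
      using bounds(1) nonneg by (intro mult_mono) auto
    also have "\<dots> = s\<^sup>2 * (Rr * Rr)"
      by (simp add: power2_eq_square)
    also have "\<dots> \<le> K * (Rr * Rr)"
      using K(2) nonneg by (intro mult_right_mono) auto
    finally show ?thesis .
  qed
  moreover have "2 * (SR * (SI / r)) \<le> K * (Rr * E)"
  proof -
    have "SR * (SI / r) \<le> (s * Rr) * (s * E)"
      using bounds(1) E nonneg by (intro mult_mono) auto
    also have "\<dots> = s\<^sup>2 * (Rr * E)"
      by (simp add: power2_eq_square)
    finally have "SR * (SI / r) \<le> s\<^sup>2 * (Rr * E)" .
    moreover have "2 * s\<^sup>2 * (Rr * E) \<le> K * (Rr * E)"
      using K(3) nonneg E by (intro mult_right_mono) auto
    ultimately show ?thesis
      by simp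
  qed
  moreover have "SI / r \<le> K * E"
    using E K(1) by (meson mult_right_mono order_trans)
  moreover have "SI / r * W \<le> K * (dI * (sqrt dI / r) * \<gamma>\<^sup>2)"
  proof -
    have "SI / r * W \<le> (s * E) * (s * (sqrt dI * \<gamma>))"
      using E bounds(4) nonneg by (intro mult_mono) auto
    also have "\<dots> = s\<^sup>2 * (dI * (sqrt dI / r) * \<gamma>\<^sup>2)"
      by (simp add: E_def power2_eq_square)
    also have "\<dots> \<le> K * (dI * (sqrt dI / r) * \<gamma>\<^sup>2)"
      using K(2) nonneg by (intro mult_right_mono) auto
    finally show ?thesis .
  qed
  moreover have "Q \<le> K * (dI * \<gamma>\<^sup>2)"
    using bounds(3) K(2) nonneg by (meson mult_right_mono order_trans zero_le_mult_iff zero_le_power2)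
  moreover have "SR * (1 + SR + SI / r) + SI * (1 + SR + W) / r + Q
      = SR + SR * SR + 2 * (SR * (SI / r)) + SI / r + SI / r * W + Q"
    by (simp add: algebra_simps add_divide_distrib)
  moreover have "K * ((Rr + 1) * (Rr + E) + dI * (sqrt dI / r + 1) * \<gamma>\<^sup>2)
      = K * Rr + K * (Rr * Rr) + K * (Rr * E) + K * E + K * (dI * (sqrt dI / r) * \<gamma>\<^sup>2)
        + K * (dI * \<gamma>\<^sup>2)"
    by (simp add: algebra_simps)
  ultimately show ?thesis
    unfolding K_def[symmetric] E_def[symmetric] by linarith
qed

definition coord :: "nat \<Rightarrow> sample \<Rightarrow> nat \<Rightarrow> real" where
  "coord d z i = (if i \<le> d then fst z i else snd z)"

lemma borel_measurable_feature [measurable]: "(\<lambda>z::sample. fst z i) \<in> borel_measurable borel"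
  by (intro borel_measurable_continuous_onI continuous_on_compose2[OF
        continuous_on_product_coordinates continuous_on_fst]) (auto intro: continuous_on_id)

lemma borel_measurable_label [measurable]: "(snd :: sample \<Rightarrow> real) \<in> borel_measurable borel"
  by (intro borel_measurable_continuous_onI continuous_intros)

lemma borel_measurable_coord [measurable]: "(\<lambda>z. coord d z i) \<in> borel_measurable borel"
  unfolding coord_def by (cases "i \<le> d") simp_all

lemma Zmat_sample: "n \<le> N \<Longrightarrow> Zmat d N v s i n = coord d (s n) i"
  by (simp add: Zmat_def coord_def)

lemma quantity_eq_sample_mean:
  assumes j: "j \<in> {1..d}"
  shows "quantity d N v s 1 j = sample_mean N (\<lambda>z. (\<Sum>i\<in>{1..d+1}. coord d z i) * coord d z j) s"
proof -
  let ?Z = "Zmat d N v s"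
  define P where "P = mmul (d+1) bT ?Z"
  have P: "P k n = (\<Sum>i\<in>{1..d+1}. coord d (s n) i)" if "n \<le> N" for k n
    using that by (simp add: P_def mmul_def bT_def Zmat_sample)
  have "mmul (N+1) P (Mmat N) 1 n = (if n \<in> {1..N} then P 1 n else 0)" for n
    unfolding mmul_def Mmat_def by (simp add: if_distrib[of "(*) _"] sum.delta' cong: if_cong)
  then have PMZ: "mmul (N+1) (mmul (N+1) P (Mmat N)) (mtr ?Z) 1 j = (\<Sum>n\<in>{1..N}. P 1 n * ?Z j n)"
    unfolding mmul_def[of "N+1" "mmul (N+1) P (Mmat N)"] mtr_def
    by (simp add: if_distrib[of "\<lambda>t. t * _"] sum.If_cases Int_absorb2)
  have A: "mmul (d+1) R (Amat d) 1 j = R 1 j" for R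
    using j unfolding mmul_def Amat_def by (simp add: if_distrib[of "(*) _"] sum.delta' cong: if_cong)
  have "quantity d N v s 1 j = (\<Sum>n\<in>{1..N}. P 1 n * ?Z j n) / real N"
    unfolding quantity_def P_def[symmetric] A PMZ by simp
  also have "\<dots> = sample_mean N (\<lambda>z. (\<Sum>i\<in>{1..d+1}. coord d z i) * coord d z j) s"
    unfolding sample_mean_def by (intro arg_cong[where f = "\<lambda>t. t / real N"] sum.cong) (auto simp: P Zmat_sample)
  finally show ?thesis .
qed

locale test_distribution =
  fixes D :: "sample measure" and d :: nat and Srob Svul Sirr :: "nat set"
    and \<alpha> \<beta> \<gamma> :: real and C :: "nat \<Rightarrow> real" and Cn :: "nat \<Rightarrow> nat \<Rightarrow> real"
    and qr qv Cbar :: real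
  assumes test_dist: "test_dist D d Srob Svul Sirr \<alpha> \<beta> \<gamma> C Cn qr qv"
    and constants_le: "\<forall>i\<in>{1..d}. C i \<le> Cbar \<and> (\<forall>n\<in>{2,3,4::nat}. Cn i n \<le> Cbar)"
begin

lemmas test_dist_conds = test_dist[unfolded test_dist_def]

lemma sets_D: "sets D = sets borel"
  using test_dist_conds by (elim conjE) assumption

sublocale prob_space D
  using test_dist_conds by (elim conjE) assumption

lemma partition_conds:
  "Srob \<union> Svul \<union> Sirr = {1..d}" "Srob \<inter> Svul = {}" "Srob \<inter> Sirr = {}" "Svul \<inter> Sirr = {}"
  using test_dist_conds by (simp_all only:)

abbreviation relevant :: "nat set" where
  "relevant \<equiv> Srob \<union> Svul"

lemma partition: "{1..d} = relevant \<union> Sirr" "relevant \<inter> Sirr = {}"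
  using partition_conds by auto

lemma finite_parts: "finite Srob" "finite Svul" "finite Sirr"
  using partition(1) by (metis finite_Un finite_atLeastAtMost)+

lemma scales: "\<alpha> > 0" "\<beta> > 0" "\<gamma> \<ge> 0"
  using test_dist_conds by (simp_all only:)

lemma borel_measurable_D: "f \<in> borel_measurable borel \<Longrightarrow> f \<in> borel_measurable D"
  using measurable_cong_sets[OF sets_D refl] by blast

lemma measurable_coord [measurable]: "(\<lambda>z. coord d z i) \<in> borel_measurable D"
  by (intro borel_measurable_D borel_measurable_coord)

lemma measurable_feature [measurable]: "(\<lambda>z. fst z i) \<in> borel_measurable D"
  by (intro borel_measurable_D borel_measurable_feature)

lemma measurable_label [measurable]: "snd \<in> borel_measurable D"
  by (intro borel_measurable_D borel_measurable_label)

lemma AE_label_square: "AE z in D. (snd z)\<^sup>2 = 1"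
proof -
  let ?pos = "{z \<in> space D. snd z = 1}" and ?neg = "{z \<in> space D. snd z = -1}"
  have sets: "?pos \<in> events" "?neg \<in> events"
    using measurable_coord[of "d + 1"] by (simp_all add: coord_def)
  have "prob ?pos = 1/2" "prob ?neg = 1/2"
    using test_dist_conds by (simp_all only:)
  then have "prob (?pos \<union> ?neg) = 1"
    by (subst finite_measure_Union[OF sets]) auto
  from AE_prob_1[OF this] show ?thesis
    by (auto elim: eventually_mono)
qed

definition scale :: "nat \<Rightarrow> real" where
  "scale i = (if i \<in> Srob then \<alpha> else if i \<in> Svul then \<beta> else \<gamma>)"

definition moment_bound :: real where
  "moment_bound = \<bar>Cbar\<bar> + Cbar\<^sup>2"

lemma scale_nonneg: "scale i \<ge> 0"
  using scales by (simp add: scale_def)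

lemma constant_pos:
  assumes "i \<in> {1..d}"
  shows "C i > 0"
proof -
  have "\<forall>i\<in>{1..d}. C i > 0 \<and> (\<forall>n\<in>{2,3,4::nat}. Cn i n \<ge> 0)"
    using test_dist_conds by (elim conjE) assumption
  with assms show ?thesis
    by blast
qed

lemma label_feature_moments:
  assumes i: "i \<in> {1..d}"
  defines "m \<equiv> \<integral>z. snd z * fst z i \<partial>D"
  shows "integrable D (\<lambda>z. snd z * fst z i)"
    and "integrable D (\<lambda>z. (snd z * fst z i - m)\<^sup>2)"
    and "\<bar>m\<bar> \<le> C i * scale i"
    and "\<bar>\<integral>z. (snd z * fst z i - m)\<^sup>2 \<partial>D\<bar> \<le> Cn i 2 * (scale i)\<^sup>2"
proof -
  have int: "\<forall>i\<in>{1..d}. integrable D (\<lambda>z. snd z * fst z i) \<and>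
      (\<forall>n\<in>{2,3,4::nat}. integrable D (\<lambda>z. (snd z * fst z i - integral\<^sup>L D (\<lambda>w. snd w * fst w i)) ^ n))"
    and mean: "\<forall>i\<in>Srob. integral\<^sup>L D (\<lambda>z. snd z * fst z i) = C i * \<alpha>"
      "\<forall>i\<in>Svul. integral\<^sup>L D (\<lambda>z. snd z * fst z i) = C i * \<beta>"
      "\<forall>i\<in>Sirr. integral\<^sup>L D (\<lambda>z. snd z * fst z i) = 0"
    and var: "\<forall>i\<in>Srob. \<forall>n\<in>{2,3,4::nat}. \<bar>integral\<^sup>L D
        (\<lambda>z. (snd z * fst z i - integral\<^sup>L D (\<lambda>w. snd w * fst w i)) ^ n)\<bar> \<le> Cn i n * \<alpha> ^ n"
      "\<forall>i\<in>Svul. \<forall>n\<in>{2,3,4::nat}. \<bar>integral\<^sup>L D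
        (\<lambda>z. (snd z * fst z i - integral\<^sup>L D (\<lambda>w. snd w * fst w i)) ^ n)\<bar> \<le> Cn i n * \<beta> ^ n"
      "\<forall>i\<in>Sirr. \<forall>n\<in>{2,3,4::nat}. \<bar>integral\<^sup>L D
        (\<lambda>z. (snd z * fst z i - integral\<^sup>L D (\<lambda>w. snd w * fst w i)) ^ n)\<bar> \<le> Cn i n * \<gamma> ^ n"
    using test_dist_conds by blast+
  show "integrable D (\<lambda>z. snd z * fst z i)" "integrable D (\<lambda>z. (snd z * fst z i - m)\<^sup>2)"
    using int i by (auto simp: m_def)
  consider "i \<in> Srob" | "i \<in> Svul" "i \<notin> Srob" | "i \<in> Sirr" "i \<notin> Srob" "i \<notin> Svul"
    using i partition_conds by blast
  then have "(m = C i * scale i \<or> m = 0) \<and>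
      \<bar>\<integral>z. (snd z * fst z i - m)\<^sup>2 \<partial>D\<bar> \<le> Cn i 2 * (scale i)\<^sup>2"
  proof cases
    case 1
    then show ?thesis using mean(1) var(1) by (simp add: m_def scale_def)
  next
    case 2
    then show ?thesis using mean(2) var(2) by (simp add: m_def scale_def)
  next
    case 3
    then show ?thesis using mean(3) var(3) by (simp add: m_def scale_def)
  qed
  then show "\<bar>m\<bar> \<le> C i * scale i" "\<bar>\<integral>z. (snd z * fst z i - m)\<^sup>2 \<partial>D\<bar> \<le> Cn i 2 * (scale i)\<^sup>2"
    using constant_pos[OF i] scale_nonneg[of i] by auto
qed

lemma feature_square_moment:
  assumes i: "i \<in> {1..d}"
  shows "integrable D (\<lambda>z. (fst z i)\<^sup>2)" and "(\<integral>z. (fst z i)\<^sup>2 \<partial>D) \<le> moment_bound * (scale i)\<^sup>2"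
proof -
  define m where "m = (\<integral>z. snd z * fst z i \<partial>D)"
  note moments = label_feature_moments[OF i, folded m_def]
  have label: "AE z in D. (snd z * fst z i)\<^sup>2 = (fst z i)\<^sup>2"
    using AE_label_square by eventually_elim (simp add: power_mult_distrib)
  have split: "(snd z * fst z i)\<^sup>2 = (snd z * fst z i - m)\<^sup>2 + 2 * m * (snd z * fst z i) - m\<^sup>2" for z
    by (simp add: power2_eq_square algebra_simps)
  have yx2: "integrable D (\<lambda>z. (snd z * fst z i)\<^sup>2)"
    unfolding split using moments(1,2)
    by (intro Bochner_Integration.integrable_diff Bochner_Integration.integrable_add
        integrable_mult_left integrable_mult_right integrable_const)
  moreover have "integrable D (\<lambda>z. (snd z * fst z i)\<^sup>2) \<longleftrightarrow> integrable D (\<lambda>z. (fst z i)\<^sup>2)"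
    by (rule integrable_cong_AE[OF _ _ label]) measurable
  ultimately show "integrable D (\<lambda>z. (fst z i)\<^sup>2)"
    by blast
  have "(\<integral>z. (fst z i)\<^sup>2 \<partial>D) = (\<integral>z. (snd z * fst z i)\<^sup>2 \<partial>D)"
    by (rule integral_cong_AE[OF _ _ label, symmetric]) measurable
  also have "\<dots> = (\<integral>z. (snd z * fst z i - m)\<^sup>2 \<partial>D) + 2 * m * m - m\<^sup>2"
    unfolding split using moments(1,2) by (simp add: m_def[symmetric] prob_space)
  also have "\<dots> = (\<integral>z. (snd z * fst z i - m)\<^sup>2 \<partial>D) + m\<^sup>2"
    by (simp add: power2_eq_square)
  also have "\<dots> \<le> Cn i 2 * (scale i)\<^sup>2 + (C i * scale i)\<^sup>2"
  proof (rule add_mono)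
    show "(\<integral>z. (snd z * fst z i - m)\<^sup>2 \<partial>D) \<le> Cn i 2 * (scale i)\<^sup>2"
      using moments(4) by linarith
    show "m\<^sup>2 \<le> (C i * scale i)\<^sup>2"
      using power_mono[OF moments(3), of 2] by simp
  qed
  also have "\<dots> \<le> \<bar>Cbar\<bar> * (scale i)\<^sup>2 + Cbar\<^sup>2 * (scale i)\<^sup>2"
  proof -
    have "C i > 0" "C i \<le> Cbar" "Cn i 2 \<le> Cbar"
      using constant_pos[OF i] constants_le i by auto
    then have "Cn i 2 \<le> \<bar>Cbar\<bar>" "(C i)\<^sup>2 \<le> Cbar\<^sup>2"
      by (simp_all add: power_mono)
    then show ?thesis
      by (simp add: power_mult_distrib add_mono mult_right_mono)
  qed
  finally show "(\<integral>z. (fst z i)\<^sup>2 \<partial>D) \<le> moment_bound * (scale i)\<^sup>2"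
    by (simp add: moment_bound_def distrib_right)
qed

lemma square_integrable_coord:
  assumes "i \<in> {1..d+1}"
  shows "integrable D (\<lambda>z. (coord d z i)\<^sup>2)"
proof (cases "i \<le> d")
  case False
  then have "AE z in D. (coord d z i)\<^sup>2 = 1"
    using AE_label_square by (simp add: coord_def)
  then show ?thesis
    using integrable_cong_AE[of "\<lambda>z. (coord d z i)\<^sup>2" D "\<lambda>_. 1"] by simp
next
  case True
  then show ?thesis
    using assms feature_square_moment(1)[of i] by (simp add: coord_def)
qed

definition rms :: "nat \<Rightarrow> real" where
  "rms i = sqrt (\<integral>z. (coord d z i)\<^sup>2 \<partial>D)"

lemma rms_nonneg: "rms i \<ge> 0"
  by (simp add: rms_def integral_nonneg_AE)

lemma rms_square: "(rms i)\<^sup>2 = (\<integral>z. (coord d z i)\<^sup>2 \<partial>D)"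
  by (simp add: rms_def integral_nonneg_AE)

lemma rms_label: "rms (d + 1) = 1"
proof -
  have "AE z in D. (coord d z (d + 1))\<^sup>2 = 1"
    using AE_label_square by (simp add: coord_def)
  then have "(\<integral>z. (coord d z (d + 1))\<^sup>2 \<partial>D) = (\<integral>z. 1 \<partial>D)"
    by (intro integral_cong_AE) auto
  then show ?thesis
    by (simp add: rms_def prob_space)
qed

lemma rms_le_scale:
  assumes "i \<in> {1..d}"
  shows "rms i \<le> sqrt moment_bound * scale i"
proof -
  have "rms i \<le> sqrt (moment_bound * (scale i)\<^sup>2)"
    using assms feature_square_moment(2)[OF assms] by (simp add: rms_def coord_def)
  also have "\<dots> = sqrt moment_bound * scale i"
    using scale_nonneg[of i] by (simp add: real_sqrt_mult)
  finally show ?thesis .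
qed

definition omit_coord :: "nat \<Rightarrow> sample \<Rightarrow> sample" where
  "omit_coord j z = (\<lambda>k. if k \<in> {1..d} - {j} then fst z k else 0, snd z)"

lemma coord_omit_coord: "i \<in> {1..d+1} \<Longrightarrow> i \<noteq> j \<Longrightarrow> coord d (omit_coord j z) i = coord d z i"
  by (auto simp: omit_coord_def coord_def)

lemma irrelevant_mean_zero:
  assumes "i \<in> Sirr"
  shows "(\<integral>z. fst z i \<partial>D) = 0"
proof -
  have "\<forall>i\<in>Sirr. integral\<^sup>L D (\<lambda>z. fst z i) = 0"
    using test_dist_conds by (elim conjE) assumption
  with assms show ?thesis
    by blast
qed

lemma irrelevant_independent:
  assumes "j \<in> Sirr"
  shows "indep_var borel (\<lambda>z. (\<lambda>k. if k = j then fst z k else 0, 0::real)) borel (omit_coord j)"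
proof -
  have "\<forall>i\<in>Sirr. indep_var borel (\<lambda>z. (\<lambda>j. if j = i then fst z j else 0, 0)) borel
     (\<lambda>z. (\<lambda>j. if j \<in> {1..d} - {i} then fst z j else 0, snd z))"
    using test_dist_conds by (elim conjE) assumption
  with assms show ?thesis
    unfolding omit_coord_def by blast
qed

lemma integral_mult_irrelevant:
  fixes \<phi> :: "real \<Rightarrow> real" and F :: "sample \<Rightarrow> real"
  assumes j: "j \<in> Sirr" and [measurable]: "\<phi> \<in> borel_measurable borel" "F \<in> borel_measurable borel"
    and \<phi>_int: "integrable D (\<lambda>z. \<phi> (fst z j))" and F_int: "integrable D (\<lambda>z. F (omit_coord j z))"
  shows "integrable D (\<lambda>z. \<phi> (fst z j) * F (omit_coord j z))"
    and "(\<integral>z. \<phi> (fst z j) * F (omit_coord j z) \<partial>D) = (\<integral>z. \<phi> (fst z j) \<partial>D) * (\<integral>z. F (omit_coord j z) \<partial>D)"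
proof -
  have "indep_var borel ((\<lambda>w. \<phi> (fst w j)) \<circ> (\<lambda>z. (\<lambda>k. if k = j then fst z k else 0, 0::real)))
      borel (F \<circ> omit_coord j)"
    by (rule indep_var_compose[OF irrelevant_independent[OF j]]) simp_all
  then have indep: "indep_var borel (\<lambda>z. \<phi> (fst z j)) borel (\<lambda>z. F (omit_coord j z))"
    by (simp add: comp_def)
  show "integrable D (\<lambda>z. \<phi> (fst z j) * F (omit_coord j z))"
    by (rule indep_var_integrable[OF indep \<phi>_int F_int])
  show "(\<integral>z. \<phi> (fst z j) * F (omit_coord j z) \<partial>D) = (\<integral>z. \<phi> (fst z j) \<partial>D) * (\<integral>z. F (omit_coord j z) \<partial>D)"
    by (rule indep_var_lebesgue_integral[OF indep \<phi>_int F_int])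
qed

lemma irrelevant_cross_moments:
  assumes j: "j \<in> Sirr" and A: "A \<subseteq> {1..d+1} - {j}"
  defines "F \<equiv> \<lambda>z. \<Sum>i\<in>A. coord d z i"
  shows "integrable D (\<lambda>z. coord d z j * F z)" "(\<integral>z. coord d z j * F z \<partial>D) = 0"
    and "integrable D (\<lambda>z. (coord d z j * F z)\<^sup>2)"
    and "(\<integral>z. (coord d z j * F z)\<^sup>2 \<partial>D) = (rms j)\<^sup>2 * (\<integral>z. (F z)\<^sup>2 \<partial>D)"
proof -
  have jd: "j \<in> {1..d}"
    using j partition by auto
  have coord_j: "coord d z j = fst z j" for z
    using jd by (simp add: coord_def)
  have F_omit: "F z = F (omit_coord j z)" for z
    using A unfolding F_def by (intro sum.cong refl coord_omit_coord[symmetric]) auto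
  have [measurable]: "F \<in> borel_measurable borel"
    unfolding F_def by measurable
  have F2: "integrable D (\<lambda>z. (F z)\<^sup>2)"
    unfolding F_def using A by (intro integrable_square_sum square_integrable_coord) auto
  have "F \<in> borel_measurable D"
    by (rule borel_measurable_D) measurable
  then have F1: "integrable D F"
    using F2 by (rule square_integrable_imp_integrable)
  have xj2: "integrable D (\<lambda>z. (fst z j)\<^sup>2)"
    by (rule feature_square_moment(1)[OF jd])
  then have xj1: "integrable D (\<lambda>z. fst z j)"
    by (rule square_integrable_imp_integrable[rotated]) simp
  note linear = integral_mult_irrelevant[OF j, of "\<lambda>t. t" F, folded F_omit]
  note quadratic = integral_mult_irrelevant[OF j, of "\<lambda>t. t\<^sup>2" "\<lambda>w. (F w)\<^sup>2", folded F_omit]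
  show "integrable D (\<lambda>z. coord d z j * F z)"
    using linear(1) xj1 F1 by (simp add: coord_j)
  show "(\<integral>z. coord d z j * F z \<partial>D) = 0"
    using linear(2) xj1 F1 irrelevant_mean_zero[OF j] by (simp add: coord_j)
  show "integrable D (\<lambda>z. (coord d z j * F z)\<^sup>2)"
    using quadratic(1) xj2 F2 by (simp add: coord_j power_mult_distrib)
  show "(\<integral>z. (coord d z j * F z)\<^sup>2 \<partial>D) = (rms j)\<^sup>2 * (\<integral>z. (F z)\<^sup>2 \<partial>D)"
    using quadratic(2) xj2 F2 by (simp add: coord_j power_mult_distrib rms_square)
qed

lemma integrable_coord_mult:
  "i \<in> {1..d+1} \<Longrightarrow> j \<in> {1..d+1} \<Longrightarrow> integrable D (\<lambda>z. coord d z i * coord d z j)"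
  by (intro integrable_mult_of_square_integrable square_integrable_coord measurable_coord)

lemma expected_abs_mean_coord_mult_le:
  assumes "i \<in> {1..d+1}" "j \<in> {1..d+1}" "N \<ge> 1"
  shows "expected_abs_mean D N (\<lambda>z. coord d z i * coord d z j) \<le> rms i * rms j"
proof -
  have "expected_abs_mean D N (\<lambda>z. coord d z i * coord d z j) \<le> (\<integral>z. \<bar>coord d z i * coord d z j\<bar> \<partial>D)"
    using assms by (intro expected_abs_mean_le prob_space_axioms integrable_coord_mult)
  also have "\<dots> \<le> rms i * rms j"
    unfolding rms_def using assms
    by (intro integral_abs_mult_le_sqrt square_integrable_coord measurable_coord)
  finally show ?thesis .
qed

lemma expected_abs_mean_irrelevant_le:
  assumes j: "j \<in> Sirr" and A: "A \<subseteq> {1..d+1} - {j}" and N: "N \<ge> 1"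
  shows "expected_abs_mean D N (\<lambda>z. coord d z j * (\<Sum>i\<in>A. coord d z i))
    \<le> rms j * sqrt (\<integral>z. (\<Sum>i\<in>A. coord d z i)\<^sup>2 \<partial>D) / sqrt N"
proof -
  note moments = irrelevant_cross_moments[OF j A]
  have "expected_abs_mean D N (\<lambda>z. coord d z j * (\<Sum>i\<in>A. coord d z i))
      \<le> sqrt ((\<integral>z. (coord d z j * (\<Sum>i\<in>A. coord d z i))\<^sup>2 \<partial>D) / real N)"
    using moments N by (intro expected_abs_mean_centered_le prob_space_axioms) measurable
  also have "\<dots> = rms j * sqrt (\<integral>z. (\<Sum>i\<in>A. coord d z i)\<^sup>2 \<partial>D) / sqrt N"
    unfolding moments(4) using rms_nonneg[of j] by (simp add: real_sqrt_mult real_sqrt_divide)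
  finally show ?thesis .
qed

lemma expected_abs_mean_irrelevant_pair_le:
  assumes "j \<in> Sirr" "i \<in> {1..d+1}" "i \<noteq> j" "N \<ge> 1"
  shows "expected_abs_mean D N (\<lambda>z. coord d z i * coord d z j) \<le> rms i * rms j / sqrt N"
  using expected_abs_mean_irrelevant_le[of j "{i}" N] assms rms_nonneg[of i]
  by (simp add: mult.commute rms_def)

lemma integral_coord_mult_irrelevant:
  "j \<in> Sirr \<Longrightarrow> i \<in> {1..d+1} \<Longrightarrow> i \<noteq> j \<Longrightarrow> (\<integral>z. coord d z j * coord d z i \<partial>D) = 0"
  using irrelevant_cross_moments(2)[of j "{i}"] by simp

definition irrelevant_rms :: real where
  "irrelevant_rms = sqrt (\<Sum>i\<in>Sirr. (rms i)\<^sup>2)"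

lemma expected_abs_mean_irrelevant_rest_le:
  assumes j: "j \<in> Sirr" and N: "N \<ge> 1"
  shows "expected_abs_mean D N (\<lambda>z. coord d z j * (\<Sum>i\<in>Sirr - {j}. coord d z i))
    \<le> rms j * irrelevant_rms / sqrt N"
proof -
  have Sirr: "Sirr \<subseteq> {1..d+1}"
    using partition by auto
  have "(\<integral>z. (\<Sum>i\<in>Sirr - {j}. coord d z i)\<^sup>2 \<partial>D) = (\<Sum>i\<in>Sirr - {j}. (rms i)\<^sup>2)"
    unfolding rms_square using Sirr finite_parts integral_coord_mult_irrelevant
    by (intro integral_square_sum_orthogonal square_integrable_coord) auto
  also have "\<dots> \<le> (\<Sum>i\<in>Sirr. (rms i)\<^sup>2)"
    using finite_parts by (intro sum_mono2) auto
  finally have "sqrt (\<integral>z. (\<Sum>i\<in>Sirr - {j}. coord d z i)\<^sup>2 \<partial>D) \<le> irrelevant_rms"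
    unfolding irrelevant_rms_def by simp
  then have "rms j * sqrt (\<integral>z. (\<Sum>i\<in>Sirr - {j}. coord d z i)\<^sup>2 \<partial>D) / sqrt N
      \<le> rms j * irrelevant_rms / sqrt N"
    using rms_nonneg[of j] by (intro divide_right_mono mult_left_mono) auto
  moreover have "Sirr - {j} \<subseteq> {1..d+1} - {j}"
    using Sirr by blast
  ultimately show ?thesis
    using expected_abs_mean_irrelevant_le[OF j _ N, of "Sirr - {j}"] by linarith
qed

lemma coord_indices:
  "{1..d+1} = insert (d+1) relevant \<union> Sirr" "insert (d+1) relevant \<inter> Sirr = {}" "d + 1 \<notin> relevant"
proof -
  have "{1..d+1} = insert (d+1) {1..d}"
    by auto
  then show "{1..d+1} = insert (d+1) relevant \<union> Sirr"
    using partition(1) by simp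
  have "d + 1 \<notin> {1..d}"
    by simp
  then show "insert (d+1) relevant \<inter> Sirr = {}" "d + 1 \<notin> relevant"
    using partition by blast+
qed

lemma expected_abs_mean_relevant_le:
  assumes j: "j \<in> relevant" and N: "N \<ge> 1"
  shows "expected_abs_mean D N (\<lambda>z. (\<Sum>i\<in>{1..d+1}. coord d z i) * coord d z j)
    \<le> rms j * ((\<Sum>i\<in>insert (d+1) relevant. rms i) + (\<Sum>i\<in>Sirr. rms i) / sqrt N)"
proof -
  have jd: "j \<in> {1..d+1}" "j \<notin> Sirr"
    using j unfolding coord_indices(1) using partition(2) by blast+
  have "expected_abs_mean D N (\<lambda>z. (\<Sum>i\<in>{1..d+1}. coord d z i) * coord d z j)
      \<le> (\<Sum>i\<in>{1..d+1}. expected_abs_mean D N (\<lambda>z. coord d z i * coord d z j))"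
    unfolding sum_distrib_right
    using jd by (intro expected_abs_mean_sum_le prob_space_axioms integrable_coord_mult) auto
  also have "\<dots> = (\<Sum>i\<in>insert (d+1) relevant. expected_abs_mean D N (\<lambda>z. coord d z i * coord d z j))
      + (\<Sum>i\<in>Sirr. expected_abs_mean D N (\<lambda>z. coord d z j * coord d z i))"
    unfolding coord_indices(1) using coord_indices(2) finite_parts
    by (subst sum.union_disjoint) (simp_all add: mult.commute)
  also have "\<dots> \<le> (\<Sum>i\<in>insert (d+1) relevant. rms i * rms j) + (\<Sum>i\<in>Sirr. rms j * rms i / sqrt N)"
  proof (intro add_mono sum_mono)
    fix i assume "i \<in> insert (d+1) relevant"
    then have "i \<in> {1..d+1}"
      unfolding coord_indices(1) by blast
    then show "expected_abs_mean D N (\<lambda>z. coord d z i * coord d z j) \<le> rms i * rms j"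
      by (rule expected_abs_mean_coord_mult_le[OF _ jd(1) N])
  next
    fix i assume i: "i \<in> Sirr"
    moreover have "j \<noteq> i"
      using i jd(2) by blast
    ultimately show "expected_abs_mean D N (\<lambda>z. coord d z j * coord d z i) \<le> rms j * rms i / sqrt N"
      by (rule expected_abs_mean_irrelevant_pair_le[OF _ jd(1) _ N])
  qed
  also have "\<dots> = rms j * ((\<Sum>i\<in>insert (d+1) relevant. rms i) + (\<Sum>i\<in>Sirr. rms i) / sqrt N)"
    by (simp add: sum_distrib_left sum_divide_distrib algebra_simps)
  finally show ?thesis .
qed

lemma expected_abs_mean_irrelevant_coord_le:
  assumes j: "j \<in> Sirr" and N: "N \<ge> 1"
  shows "expected_abs_mean D N (\<lambda>z. (\<Sum>i\<in>{1..d+1}. coord d z i) * coord d z j)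
    \<le> rms j * (\<Sum>i\<in>insert (d+1) relevant. rms i) / sqrt N + (rms j)\<^sup>2 + rms j * irrelevant_rms / sqrt N"
proof -
  let ?R = "insert (d+1) relevant" and ?T = "\<lambda>z. \<Sum>i\<in>Sirr - {j}. coord d z i"
  have jd: "j \<in> {1..d+1}"
    using j unfolding coord_indices(1) by blast
  have R: "i \<in> {1..d+1}" "i \<noteq> j" if "i \<in> ?R" for i
    using that j coord_indices(2) unfolding coord_indices(1) by blast+
  have split: "(\<Sum>i\<in>{1..d+1}. coord d z i) * coord d z j
      = (\<Sum>i\<in>?R. coord d z i * coord d z j) + (coord d z j * coord d z j + coord d z j * ?T z)" for z
  proof -
    have "(\<Sum>i\<in>{1..d+1}. coord d z i) = (\<Sum>i\<in>?R. coord d z i) + (\<Sum>i\<in>Sirr. coord d z i)"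
      unfolding coord_indices(1) using coord_indices(2) finite_parts
      by (intro sum.union_disjoint) auto
    also have "(\<Sum>i\<in>Sirr. coord d z i) = coord d z j + ?T z"
      by (rule sum.remove[OF finite_parts(3) j])
    finally have sum_eq: "(\<Sum>i\<in>{1..d+1}. coord d z i) = (\<Sum>i\<in>?R. coord d z i) + (coord d z j + ?T z)" .
    show ?thesis
      unfolding sum_eq sum_distrib_right[symmetric] by (simp add: algebra_simps)
  qed
  have "Sirr - {j} \<subseteq> {1..d+1} - {j}"
    unfolding coord_indices(1) by blast
  then have int_T: "integrable D (\<lambda>z. coord d z j * ?T z)"
    by (rule irrelevant_cross_moments(1)[OF j])
  have "expected_abs_mean D N (\<lambda>z. (\<Sum>i\<in>{1..d+1}. coord d z i) * coord d z j)
      \<le> expected_abs_mean D N (\<lambda>z. \<Sum>i\<in>?R. coord d z i * coord d z j)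
        + (expected_abs_mean D N (\<lambda>z. coord d z j * coord d z j)
           + expected_abs_mean D N (\<lambda>z. coord d z j * ?T z))"
    unfolding split using R jd int_T
    by (intro order_trans[OF expected_abs_mean_add_le] add_mono expected_abs_mean_add_le order_refl
        prob_space_axioms Bochner_Integration.integrable_add Bochner_Integration.integrable_sum
        integrable_coord_mult) auto
  also have "\<dots> \<le> (\<Sum>i\<in>?R. rms i * rms j / sqrt N) + (rms j * rms j + rms j * irrelevant_rms / sqrt N)"
  proof (intro add_mono)
    have "expected_abs_mean D N (\<lambda>z. \<Sum>i\<in>?R. coord d z i * coord d z j)
        \<le> (\<Sum>i\<in>?R. expected_abs_mean D N (\<lambda>z. coord d z i * coord d z j))"
      using R jd by (intro expected_abs_mean_sum_le prob_space_axioms integrable_coord_mult) auto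
    also have "\<dots> \<le> (\<Sum>i\<in>?R. rms i * rms j / sqrt N)"
      using R by (intro sum_mono expected_abs_mean_irrelevant_pair_le[OF j _ _ N]) auto
    finally show "expected_abs_mean D N (\<lambda>z. \<Sum>i\<in>?R. coord d z i * coord d z j)
        \<le> (\<Sum>i\<in>?R. rms i * rms j / sqrt N)" .
    show "expected_abs_mean D N (\<lambda>z. coord d z j * coord d z j) \<le> rms j * rms j"
      by (rule expected_abs_mean_coord_mult_le[OF jd jd N])
    show "expected_abs_mean D N (\<lambda>z. coord d z j * ?T z) \<le> rms j * irrelevant_rms / sqrt N"
      by (rule expected_abs_mean_irrelevant_rest_le[OF j N])
  qed
  also have "\<dots> = rms j * (\<Sum>i\<in>?R. rms i) / sqrt N + (rms j)\<^sup>2 + rms j * irrelevant_rms / sqrt N"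
    by (simp add: sum_distrib_left sum_divide_distrib power2_eq_square mult.commute)
  finally show ?thesis .
qed

lemma integrable_coord_sum_mult:
  "j \<in> {1..d+1} \<Longrightarrow> integrable D (\<lambda>z. (\<Sum>i\<in>{1..d+1}. coord d z i) * coord d z j)"
  unfolding sum_distrib_right by (intro Bochner_Integration.integrable_sum integrable_coord_mult) auto

lemma integral_row_l1_quantity:
  "integral\<^sup>L (PiM {1..N} (\<lambda>_. D)) (\<lambda>s. row_l1 d (quantity d N v s))
    = (\<Sum>j\<in>{1..d}. expected_abs_mean D N (\<lambda>z. (\<Sum>i\<in>{1..d+1}. coord d z i) * coord d z j))"
proof -
  have "row_l1 d (quantity d N v s)
      = (\<Sum>j\<in>{1..d}. \<bar>sample_mean N (\<lambda>z. (\<Sum>i\<in>{1..d+1}. coord d z i) * coord d z j) s\<bar>)" for s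
    unfolding row_l1_def by (intro sum.cong refl arg_cong[where f = abs] quantity_eq_sample_mean)
  moreover have "integrable (PiM {1..N} (\<lambda>_. D))
      (\<lambda>s. \<bar>sample_mean N (\<lambda>z. (\<Sum>i\<in>{1..d+1}. coord d z i) * coord d z j) s\<bar>)" if "j \<in> {1..d}" for j
    using that integrable_sample_mean[OF prob_space_axioms integrable_coord_sum_mult[of j]] by auto
  ultimately show ?thesis
    unfolding expected_abs_mean_def by (simp add: Bochner_Integration.integral_sum)
qed

lemma expected_row_l1_le_rms:
  assumes N: "N \<ge> 1"
  shows "integral\<^sup>L (PiM {1..N} (\<lambda>_. D)) (\<lambda>s. row_l1 d (quantity d N v s))
    \<le> (\<Sum>i\<in>relevant. rms i) * (1 + (\<Sum>i\<in>relevant. rms i) + (\<Sum>i\<in>Sirr. rms i) / sqrt N)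
      + (\<Sum>i\<in>Sirr. rms i) * (1 + (\<Sum>i\<in>relevant. rms i) + irrelevant_rms) / sqrt N
      + (\<Sum>i\<in>Sirr. (rms i)\<^sup>2)"
proof -
  let ?E = "\<lambda>j. expected_abs_mean D N (\<lambda>z. (\<Sum>i\<in>{1..d+1}. coord d z i) * coord d z j)"
  let ?SR = "\<Sum>i\<in>relevant. rms i" and ?SI = "\<Sum>i\<in>Sirr. rms i"
  have label_relevant: "(\<Sum>i\<in>insert (d+1) relevant. rms i) = 1 + ?SR"
    using finite_parts coord_indices(3) rms_label by simp
  have "integral\<^sup>L (PiM {1..N} (\<lambda>_. D)) (\<lambda>s. row_l1 d (quantity d N v s))
      = (\<Sum>j\<in>relevant. ?E j) + (\<Sum>j\<in>Sirr. ?E j)"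
    unfolding integral_row_l1_quantity partition(1)
    using partition(2) finite_parts by (intro sum.union_disjoint) auto
  also have "\<dots> \<le> (\<Sum>j\<in>relevant. rms j * ((1 + ?SR) + ?SI / sqrt N))
      + (\<Sum>j\<in>Sirr. rms j * (1 + ?SR) / sqrt N + (rms j)\<^sup>2 + rms j * irrelevant_rms / sqrt N)"
    using expected_abs_mean_relevant_le[OF _ N] expected_abs_mean_irrelevant_coord_le[OF _ N]
    unfolding label_relevant by (intro add_mono sum_mono) auto
  also have "\<dots> = ?SR * ((1 + ?SR) + ?SI / sqrt N)
      + (?SI * (1 + ?SR) / sqrt N + (\<Sum>i\<in>Sirr. (rms i)\<^sup>2) + ?SI * irrelevant_rms / sqrt N)"
    by (simp only: sum.distrib sum_distrib_right[symmetric] sum_divide_distrib[symmetric])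
  also have "\<dots> = ?SR * (1 + ?SR + ?SI / sqrt N) + ?SI * (1 + ?SR + irrelevant_rms) / sqrt N
      + (\<Sum>i\<in>Sirr. (rms i)\<^sup>2)"
    by (simp add: algebra_simps add_divide_distrib)
  finally show ?thesis .
qed

lemma rms_le_parts:
  "i \<in> Srob \<Longrightarrow> rms i \<le> sqrt moment_bound * \<alpha>"
  "i \<in> Svul \<Longrightarrow> rms i \<le> sqrt moment_bound * \<beta>"
  "i \<in> Sirr \<Longrightarrow> rms i \<le> sqrt moment_bound * \<gamma>"
proof -
  have sub: "Srob \<subseteq> {1..d}" "Svul \<subseteq> {1..d}" "Sirr \<subseteq> {1..d}"
    using partition_conds(1) by blast+
  show "rms i \<le> sqrt moment_bound * \<alpha>" if "i \<in> Srob"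
    using rms_le_scale[of i] sub that by (auto simp: scale_def)
  show "rms i \<le> sqrt moment_bound * \<beta>" if "i \<in> Svul"
  proof -
    have "i \<in> {1..d}" "i \<notin> Srob"
      using sub that partition_conds(2) by blast+
    then show ?thesis
      using rms_le_scale[of i] that by (simp add: scale_def)
  qed
  show "rms i \<le> sqrt moment_bound * \<gamma>" if "i \<in> Sirr"
  proof -
    have "i \<in> {1..d}" "i \<notin> Srob" "i \<notin> Svul"
      using sub that partition_conds(3,4) by blast+
    then show ?thesis
      using rms_le_scale[of i] by (simp add: scale_def)
  qed
qed

lemma expected_row_l1_le:
  assumes N: "N \<ge> 1"
  shows "integral\<^sup>L (PiM {1..N} (\<lambda>_. D)) (\<lambda>s. row_l1 d (quantity d N v s))
    \<le> (1 + sqrt moment_bound + 2 * moment_bound) *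
      ((real (card Srob) * \<alpha> + real (card Svul) * \<beta> + 1) *
         (real (card Srob) * \<alpha> + real (card Svul) * \<beta> + real (card Sirr) * \<gamma> / sqrt (real N))
       + real (card Sirr) * (sqrt (real (card Sirr) / real N) + 1) * \<gamma>\<^sup>2)"
proof -
  let ?s = "sqrt moment_bound" and ?Rr = "real (card Srob) * \<alpha> + real (card Svul) * \<beta>"
    and ?dI = "real (card Sirr)"
  have s: "?s \<ge> 0" "?s\<^sup>2 = moment_bound"
    by (simp_all add: moment_bound_def)
  have "(\<Sum>i\<in>relevant. rms i) = (\<Sum>i\<in>Srob. rms i) + (\<Sum>i\<in>Svul. rms i)"
    using finite_parts partition_conds(2) by (intro sum.union_disjoint) auto
  also have "\<dots> \<le> (\<Sum>i\<in>Srob. ?s * \<alpha>) + (\<Sum>i\<in>Svul. ?s * \<beta>)"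
    by (intro add_mono sum_mono rms_le_parts)
  finally have SR: "(\<Sum>i\<in>relevant. rms i) \<le> ?s * ?Rr"
    by (simp add: algebra_simps)
  have "(\<Sum>i\<in>Sirr. rms i) \<le> (\<Sum>i\<in>Sirr. ?s * \<gamma>)"
    by (intro sum_mono rms_le_parts)
  then have SI: "(\<Sum>i\<in>Sirr. rms i) \<le> ?s * (?dI * \<gamma>)"
    by (simp add: algebra_simps)
  have "(\<Sum>i\<in>Sirr. (rms i)\<^sup>2) \<le> (\<Sum>i\<in>Sirr. (?s * \<gamma>)\<^sup>2)"
    by (intro sum_mono power_mono rms_le_parts rms_nonneg)
  then have Q: "(\<Sum>i\<in>Sirr. (rms i)\<^sup>2) \<le> ?s\<^sup>2 * (?dI * \<gamma>\<^sup>2)"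
    by (simp add: algebra_simps power_mult_distrib)
  then have W: "irrelevant_rms \<le> ?s * (sqrt ?dI * \<gamma>)"
    unfolding irrelevant_rms_def using s scales
    by (metis real_sqrt_le_mono real_sqrt_mult real_sqrt_abs abs_of_nonneg)
  have "integral\<^sup>L (PiM {1..N} (\<lambda>_. D)) (\<lambda>s. row_l1 d (quantity d N v s))
      \<le> (1 + ?s + 2 * ?s\<^sup>2) * ((?Rr + 1) * (?Rr + ?dI * \<gamma> / sqrt N) + ?dI * (sqrt ?dI / sqrt N + 1) * \<gamma>\<^sup>2)"
    using N s scales SR SI Q W
    by (intro order_trans[OF expected_row_l1_le_rms[OF N]] polynomial_bound_arith)
      (auto simp: irrelevant_rms_def intro!: sum_nonneg rms_nonneg)
  then show ?thesis
    by (simp add: s real_sqrt_divide)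
qed

end

theorem lemmaE2:
  fixes Cbar :: real
  shows "\<exists>K>0. \<forall>(D :: sample measure) d Srob Svul Sirr \<alpha> \<beta> \<gamma> C Cn qr qv (N::nat) (v :: nat \<Rightarrow> real).
    test_dist D d Srob Svul Sirr \<alpha> \<beta> \<gamma> C Cn qr qv \<and> N \<ge> 1 \<and>
    (\<forall>i\<in>{1..d}. C i \<le> Cbar \<and> (\<forall>n\<in>{2,3,4::nat}. Cn i n \<le> Cbar)) \<longrightarrow>
    integral\<^sup>L (PiM {1..N} (\<lambda>_. D)) (\<lambda>s. row_l1 d (quantity d N v s))
      \<le> K * ((real (card Srob) * \<alpha> + real (card Svul) * \<beta> + 1) *
               (real (card Srob) * \<alpha> + real (card Svul) * \<beta> + real (card Sirr) * \<gamma> / sqrt (real N))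
             + real (card Sirr) * (sqrt (real (card Sirr) / real N) + 1) * \<gamma>\<^sup>2)"
proof (intro exI conjI allI impI)
  let ?B = "\<bar>Cbar\<bar> + Cbar\<^sup>2"
  show "0 < 1 + sqrt ?B + 2 * ?B"
    by (simp add: add_pos_nonneg)
  fix D :: "sample measure" and d Srob Svul Sirr \<alpha> \<beta> \<gamma> C Cn qr qv and N :: nat and v :: "nat \<Rightarrow> real"
  assume H: "test_dist D d Srob Svul Sirr \<alpha> \<beta> \<gamma> C Cn qr qv \<and> N \<ge> 1 \<and>
    (\<forall>i\<in>{1..d}. C i \<le> Cbar \<and> (\<forall>n\<in>{2,3,4::nat}. Cn i n \<le> Cbar))"
  then interpret test_distribution D d Srob Svul Sirr \<alpha> \<beta> \<gamma> C Cn qr qv Cbar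
    by unfold_locales auto
  show "integral\<^sup>L (PiM {1..N} (\<lambda>_. D)) (\<lambda>s. row_l1 d (quantity d N v s))
      \<le> (1 + sqrt ?B + 2 * ?B) * ((real (card Srob) * \<alpha> + real (card Svul) * \<beta> + 1) *
               (real (card Srob) * \<alpha> + real (card Svul) * \<beta> + real (card Sirr) * \<gamma> / sqrt (real N))
             + real (card Sirr) * (sqrt (real (card Sirr) / real N) + 1) * \<gamma>\<^sup>2)"
    using expected_row_l1_le[of N v] H by (simp add: moment_bound_def)
qed

end
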